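(* Let $\mathbb S=\{(X_1,X_2,A)\in\mathbb C^2\times\mathbb R: -2\,\mathrm{Re}(X_1+X_2)-2\,\mathrm{Re}(X_1\overline{X}_2e^{-2iA})+|X_1|^2+|X_2|^2+1=0\}$ and $\mathbb S_{124}=\{(X_1,X_2,A)\in\mathbb C^2\times\mathbb R:\mathrm{Re}(\overline{X}_1e^{iA})=0\}$. Writing $X_1=a+bi$, $X_2=c+di$, the intersection $\mathbb S\cap\mathbb S_{124}$ is not transversal; it is a union of $2$-dimensional real analytic varieties, given by the equations $a+b\tan A=0$, $a+c=1$, $b-d=0$ where $A\ne\pm\pi/2+2k\pi$, and by $a+c=1$, $b=0$, $d=0$ where $A=\pm\pi/2+2k\pi$ ($k\in\mathbb Z$). *)

theory Defs
  imports "HOL-Analysis.Analysis"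
begin

definition FS :: "complex \<times> complex \<times> real \<Rightarrow> real" where
  "FS = (\<lambda>(X1, X2, A). - 2 * Re (X1 + X2) - 2 * Re (X1 * cnj X2 * exp (- 2 * \<i> * of_real A))
          + (cmod X1)\<^sup>2 + (cmod X2)\<^sup>2 + 1)"

definition F124 :: "complex \<times> complex \<times> real \<Rightarrow> real" where
  "F124 = (\<lambda>(X1, X2, A). Re (cnj X1 * exp (\<i> * of_real A)))"

definition SS :: "(complex \<times> complex \<times> real) set" where
  "SS = {p. FS p = 0}"

definition SS124 :: "(complex \<times> complex \<times> real) set" where
  "SS124 = {p. F124 p = 0}"

definition transversal_at ::
  "('a::real_normed_vector \<Rightarrow> real) \<Rightarrow> ('a \<Rightarrow> real) \<Rightarrow> 'a \<Rightarrow> bool" where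
  "transversal_at F G p \<longleftrightarrow>
     (\<exists>F' G'. (F has_derivative F') (at p) \<and> (G has_derivative G') (at p) \<and>
        (\<forall>s t. (\<forall>v. s * F' v + t * G' v = 0) \<longrightarrow> s = 0 \<and> t = 0))"

definition transversal_intersection ::
  "('a::real_normed_vector \<Rightarrow> real) \<Rightarrow> ('a \<Rightarrow> real) \<Rightarrow> bool" where
  "transversal_intersection F G \<longleftrightarrow> (\<forall>p. F p = 0 \<and> G p = 0 \<longrightarrow> transversal_at F G p)"

end

theory Submission
  imports Defs
begin

text \<open>
  Everything rests on the identity
  \<open>FS (X\<^sub>1, X\<^sub>2, A) = |X\<^sub>1 + cnj X\<^sub>2 - 1|\<^sup>2 - 4 Re (X\<^sub>2 e\<^sup>i\<^sup>A) F124 (X\<^sub>1, X\<^sub>2, A)\<close>.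
  On \<open>F124 = 0\<close> the function \<open>FS\<close> is thus a squared modulus, so the intersection is cut out
  by \<open>X\<^sub>1 + cnj X\<^sub>2 = 1\<close> (i.e. \<open>a + c = 1\<close>, \<open>b = d\<close>) together with
  \<open>a cos A + b sin A = 0\<close>. A squared modulus has zero differential where it vanishes, so at every
  point of the intersection \<open>dFS = -4 Re (X\<^sub>2 e\<^sup>i\<^sup>A) dF124\<close>: the intersection is
  transversal nowhere.
\<close>

lemma not_transversal_at_norm_square_minus_mult:
  fixes q :: "'a::real_normed_vector \<Rightarrow> 'b::real_inner"
  assumes F: "\<And>x. F x = (norm (q x))\<^sup>2 - h x * G x"
    and "q differentiable (at p)" "h differentiable (at p)"
    and "q p = 0" "G p = 0"
  shows "\<not> transversal_at F G p"
proof
  assume "transversal_at F G p"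
  then obtain F' G' where dF: "(F has_derivative F') (at p)" and dG: "(G has_derivative G') (at p)"
    and indep: "\<forall>s t. (\<forall>v. s * F' v + t * G' v = 0) \<longrightarrow> s = 0 \<and> t = 0"
    unfolding transversal_at_def by blast
  obtain q' h' where dq: "(q has_derivative q') (at p)" and dh: "(h has_derivative h') (at p)"
    using assms(2,3) by (auto simp: differentiable_def)
  have "((\<lambda>x. q x \<bullet> q x - h x * G x) has_derivative (\<lambda>v. - h p * G' v)) (at p)"
    using \<open>q p = 0\<close> \<open>G p = 0\<close> by (auto intro!: derivative_eq_intros dq dh dG)
  moreover have "F = (\<lambda>x. q x \<bullet> q x - h x * G x)"
    using F by (simp add: fun_eq_iff power2_norm_eq_inner)
  ultimately have "(F has_derivative (\<lambda>v. - h p * G' v)) (at p)"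
    by simp
  then have "F' = (\<lambda>v. - h p * G' v)"
    using has_derivative_unique[OF dF] by blast
  then show False
    using indep[rule_format, of 1 "h p"] by simp
qed

lemma cos_eq_0_iff_pm_half_pi:
  "cos A = 0 \<longleftrightarrow> (\<exists>k::int. A = pi / 2 + 2 * of_int k * pi \<or> A = - pi / 2 + 2 * of_int k * pi)"
proof
  assume "cos A = 0"
  then obtain n :: int where n: "A = n * pi + pi / 2"
    using cos_zero_iff_int2 by blast
  show "\<exists>k::int. A = pi / 2 + 2 * of_int k * pi \<or> A = - pi / 2 + 2 * of_int k * pi"
  proof (cases "even n")
    case True
    then obtain k where "n = 2 * k" by blast
    then show ?thesis using n by (intro exI[of _ k]) (auto simp: algebra_simps)
  next
    case False
    then obtain k where "n = 2 * k + 1" using oddE by blast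
    then show ?thesis using n by (intro exI[of _ "k + 1"]) (auto simp: algebra_simps)
  qed
next
  assume "\<exists>k::int. A = pi / 2 + 2 * of_int k * pi \<or> A = - pi / 2 + 2 * of_int k * pi"
  then obtain k :: int where "A = of_int (2 * k) * pi + pi / 2 \<or> A = of_int (2 * k - 1) * pi + pi / 2"
    by (auto simp: algebra_simps)
  then show "cos A = 0" using cos_zero_iff_int2 by blast
qed

lemma F124_eq: "F124 (X1, X2, A) = Re X1 * cos A + Im X1 * sin A"
  by (simp add: F124_def exp_Euler cos_of_real sin_of_real flip: of_real_mult)

lemma FS_eq:
  "FS (X1, X2, A) = (cmod (X1 + cnj X2 - 1))\<^sup>2 - 4 * Re (X2 * exp (\<i> * of_real A)) * F124 (X1, X2, A)"
proof -
  have "cos (A * 2) = (cos A)\<^sup>2 - (sin A)\<^sup>2" "sin (A * 2) = 2 * sin A * cos A"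
    using cos_double[of A] sin_double[of A] by (simp_all add: mult.commute)
  then show ?thesis
    unfolding FS_def F124_eq cmod_power2
    by (simp add: Re_exp Im_exp algebra_simps) (use sin_cos_squared_add[of A] in algebra)
qed

lemma SS_Int_SS124: "SS \<inter> SS124 = {(X1, X2, A). F124 (X1, X2, A) = 0 \<and> X1 + cnj X2 = 1}"
  by (auto simp: SS_def SS124_def FS_eq)

lemma not_transversal_at_SS_Int_SS124:
  assumes "p \<in> SS \<inter> SS124"
  shows "\<not> transversal_at FS F124 p"
proof (rule not_transversal_at_norm_square_minus_mult)
  show "FS x = (cmod (fst x + cnj (fst (snd x)) - 1))\<^sup>2
      - 4 * (Re (fst (snd x)) * cos (snd (snd x)) - Im (fst (snd x)) * sin (snd (snd x))) * F124 x"
    for x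
    using FS_eq[of "fst x" "fst (snd x)" "snd (snd x)"] by (simp add: Re_exp Im_exp)
  show "(\<lambda>x. fst x + cnj (fst (snd x)) - 1) differentiable (at p)"
    unfolding differentiable_def by (rule exI) (rule derivative_eq_intros refl)+
  show "(\<lambda>x. 4 * (Re (fst (snd x)) * cos (snd (snd x)) - Im (fst (snd x)) * sin (snd (snd x))))
      differentiable (at p)"
    unfolding differentiable_def by (rule exI) (rule derivative_eq_intros refl)+
  show "fst p + cnj (fst (snd p)) - 1 = 0" "F124 p = 0"
    using assms by (auto simp: SS_Int_SS124)
qed

lemma F124_eq_0_iff:
  "F124 (X1, X2, A) = 0 \<longleftrightarrow> (if cos A = 0 then Im X1 = 0 else Re X1 + Im X1 * tan A = 0)"
proof (cases "cos A = 0")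
  case True
  then have "sin A \<noteq> 0"
    using sin_cos_squared_add[of A] by auto
  with True show ?thesis by (simp add: F124_eq)
next
  case False
  then show ?thesis by (simp add: F124_eq tan_def field_simps)
qed

theorem proposition3p7:
  shows "\<not> transversal_intersection FS F124 \<and>
    SS \<inter> SS124 =
      {(X1, X2, A). (\<not> (\<exists>k::int. A = pi / 2 + 2 * of_int k * pi \<or> A = - pi / 2 + 2 * of_int k * pi)) \<and>
          Re X1 + Im X1 * tan A = 0 \<and> Re X1 + Re X2 = 1 \<and> Im X1 - Im X2 = 0}
      \<union> {(X1, X2, A). (\<exists>k::int. A = pi / 2 + 2 * of_int k * pi \<or> A = - pi / 2 + 2 * of_int k * pi) \<and>
          Re X1 + Re X2 = 1 \<and> Im X1 = 0 \<and> Im X2 = 0}"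
  (is "_ \<and> _ = ?R")
proof
  have "(0, 1, 0) \<in> SS \<inter> SS124"
    by (simp add: SS_Int_SS124 F124_eq)
  with not_transversal_at_SS_Int_SS124 show "\<not> transversal_intersection FS F124"
    by (auto simp: transversal_intersection_def SS_def SS124_def)
next
  show "SS \<inter> SS124 = ?R"
    unfolding SS_Int_SS124 cos_eq_0_iff_pm_half_pi[symmetric]
    by (auto simp: F124_eq_0_iff complex_eq_iff)
qed

end
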